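(* Let $K$ be a field of characteristic $\neq 2$, $n\ge1$, and let $\mathcal C$ be an EACP over $K$ with natural basis $\{h_1,\dots,h_n,r\}$ and structural constants $a_{ij},b_i$. Suppose $\sum_{j=1}^n a_{ij}a_{jk}=0$ and $b_i=0$ for all $i,k=1,\dots,n$. Then $\mathcal C$ is nilpotent with index of nilpotency equal to $3$.
   Context: An EACP over a field $K$ (characteristic $\neq 2$) is a $K$-algebra $\mathcal C$ with a basis $\{h_1,\dots,h_n,r\}$ (called a natural basis) whose multiplication is determined by bilinearity from $$h_ir=rh_i=\tfrac12\Big(\sum_{j=1}^n a_{ij}h_j+b_ir\Big),\qquad h_ih_j=0\ (i,j=1,\dots,n),\qquad rr=0,$$ for some constants $a_{ij},b_i\in K$. For an algebra $\mathcal A$ set $\mathcal A^1=\mathcal A$ and $\mathcal A^k=\sum_{i=1}^{k-1}\mathcal A^i\mathcal A^{k-i}$; $\mathcal A$ is nilpotent if $\mathcal A^k=0$ for some $k$, and the least such $k$ is the index of nilpotency. *)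

theory Defs
  imports Main
begin

text \<open>An EACP over a field 'k with natural basis h_0,...,h_(n-1), r.
  Elements are coordinate functions v :: nat => 'k, where v i (i < n) is the
  coefficient of h_i and v n is the coefficient of r; coordinates above n vanish.\<close>

definition eacp_carrier :: "nat \<Rightarrow> (nat \<Rightarrow> 'k::field) set" where
  "eacp_carrier n = {v. \<forall>m>n. v m = 0}"

text \<open>Bilinear product: the only nonzero basis products are
  h_i r = r h_i = 1/2 (sum_j a_ij h_j + b_i r).\<close>
definition eacp_mult ::
  "(nat \<Rightarrow> nat \<Rightarrow> 'k::field) \<Rightarrow> (nat \<Rightarrow> 'k) \<Rightarrow> nat \<Rightarrow>
   (nat \<Rightarrow> 'k) \<Rightarrow> (nat \<Rightarrow> 'k) \<Rightarrow> (nat \<Rightarrow> 'k)" where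
  "eacp_mult a b n x y = (\<lambda>m. \<Sum>i<n. (x i * y n + x n * y i) *
      (if m < n then a i m / 2 else if m = n then b i / 2 else 0))"

text \<open>eacp_pow a b n k v  means  v belongs to the k-th power C^k, where
  C^1 = C and C^k = sum_{i=1}^{k-1} C^i C^(k-i) (for k >= 2 this is the linear
  span of all products x y with x in C^i, y in C^(k-i), 1 <= i < k).\<close>
inductive eacp_pow ::
  "(nat \<Rightarrow> nat \<Rightarrow> 'k::field) \<Rightarrow> (nat \<Rightarrow> 'k) \<Rightarrow> nat \<Rightarrow> nat \<Rightarrow> (nat \<Rightarrow> 'k) \<Rightarrow> bool"
  for a b n where
  base: "v \<in> eacp_carrier n \<Longrightarrow> eacp_pow a b n 1 v"
| zero: "k \<ge> 2 \<Longrightarrow> eacp_pow a b n k (\<lambda>m. 0)"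
| add: "k \<ge> 2 \<Longrightarrow> eacp_pow a b n k x \<Longrightarrow> eacp_pow a b n k y \<Longrightarrow>
          eacp_pow a b n k (\<lambda>m. x m + y m)"
| smult: "k \<ge> 2 \<Longrightarrow> eacp_pow a b n k x \<Longrightarrow> eacp_pow a b n k (\<lambda>m. c * x m)"
| prod: "eacp_pow a b n i x \<Longrightarrow> eacp_pow a b n j y \<Longrightarrow>
          eacp_pow a b n (i + j) (eacp_mult a b n x y)"

definition eacp_power :: "(nat \<Rightarrow> nat \<Rightarrow> 'k::field) \<Rightarrow> (nat \<Rightarrow> 'k) \<Rightarrow> nat \<Rightarrow> nat \<Rightarrow> (nat \<Rightarrow> 'k) set" where
  "eacp_power a b n k = {v. eacp_pow a b n k v}"

definition eacp_nilpotent :: "(nat \<Rightarrow> nat \<Rightarrow> 'k::field) \<Rightarrow> (nat \<Rightarrow> 'k) \<Rightarrow> nat \<Rightarrow> bool" where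
  "eacp_nilpotent a b n \<longleftrightarrow> (\<exists>k\<ge>1. eacp_power a b n k = {\<lambda>m. 0})"

definition eacp_nil_index :: "(nat \<Rightarrow> nat \<Rightarrow> 'k::field) \<Rightarrow> (nat \<Rightarrow> 'k) \<Rightarrow> nat \<Rightarrow> nat" where
  "eacp_nil_index a b n = (LEAST k. k \<ge> 1 \<and> eacp_power a b n k = {\<lambda>m. 0})"

end

theory Submission
  imports Defs
begin

text \<open>With b = 0 every product lies in the span of the h_j, with coordinate vector in the
  row space of A = (a_ij); since A^2 = 0 such vectors lie in the left kernel of A. A product
  with such a vector vanishes, because its h-coordinates are y_r (x A) / 2. Hence C^3 = 0,
  while h_i r has coordinate a_ij / 2 \<noteq> 0 at h_j, so C^2 \<noteq> 0.\<close>

definition eacp_left_kernel :: "(nat \<Rightarrow> nat \<Rightarrow> 'k::field) \<Rightarrow> nat \<Rightarrow> (nat \<Rightarrow> 'k) \<Rightarrow> bool" where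
  "eacp_left_kernel a n v \<longleftrightarrow>
     (\<forall>m\<ge>n. v m = 0) \<and> (\<forall>m<n. (\<Sum>i<n. v i * a i m) = 0)"

lemma eacp_mult_commute: "eacp_mult a b n x y = eacp_mult a b n y x"
  by (simp add: eacp_mult_def add.commute mult.commute)

lemma eacp_mult_below:
  "m < n \<Longrightarrow> eacp_mult a b n x y m = (\<Sum>i<n. (x i * y n + x n * y i) * a i m) / 2"
  by (simp add: eacp_mult_def sum_divide_distrib)

lemma eacp_mult_not_below:
  "\<forall>i<n. b i = 0 \<Longrightarrow> m \<ge> n \<Longrightarrow> eacp_mult a b n x y m = 0"
  by (auto simp: eacp_mult_def intro!: sum.neutral)

lemma eacp_mult_left_kernel:
  assumes sq: "\<forall>i<n. \<forall>k<n. (\<Sum>j<n. a i j * a j k) = 0" and b0: "\<forall>i<n. b i = 0"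
  shows "eacp_left_kernel a n (eacp_mult a b n x y)"
  unfolding eacp_left_kernel_def
proof (intro conjI allI impI)
  fix m assume "m \<ge> n"
  then show "eacp_mult a b n x y m = 0" using b0 by (simp add: eacp_mult_not_below)
next
  fix m assume m: "m < n"
  have "(\<Sum>i<n. eacp_mult a b n x y i * a i m)
      = (\<Sum>i<n. \<Sum>l<n. (x l * y n + x n * y l) / 2 * (a l i * a i m))"
    by (intro sum.cong refl)
       (simp add: eacp_mult_below sum_distrib_left sum_divide_distrib mult_ac)
  also have "\<dots> = (\<Sum>l<n. (x l * y n + x n * y l) / 2 * (\<Sum>i<n. a l i * a i m))"
    by (subst sum.swap) (simp add: sum_distrib_left)
  also have "\<dots> = 0" using sq m by simp
  finally show "(\<Sum>i<n. eacp_mult a b n x y i * a i m) = 0" .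
qed

lemma eacp_mult_left_kernel_zero:
  assumes b0: "\<forall>i<n. b i = 0" and x: "eacp_left_kernel a n x"
  shows "eacp_mult a b n x y = (\<lambda>m. 0)"
proof
  fix m
  have xn: "x n = 0" and xA: "\<And>m. m < n \<Longrightarrow> (\<Sum>i<n. x i * a i m) = 0"
    using x by (auto simp: eacp_left_kernel_def)
  show "eacp_mult a b n x y m = 0"
  proof (cases "m < n")
    case True
    then have "eacp_mult a b n x y m = y n * (\<Sum>i<n. x i * a i m) / 2"
      by (simp add: eacp_mult_below xn sum_distrib_left mult_ac)
    with True xA show ?thesis by simp
  next
    case False
    with b0 show ?thesis by (simp add: eacp_mult_not_below)
  qed
qed

lemma eacp_pow_ge_1: "eacp_pow a b n k v \<Longrightarrow> k \<ge> 1"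
  by (induction rule: eacp_pow.induct) auto

lemma eacp_pow_2_left_kernel:
  assumes sq: "\<forall>i<n. \<forall>k<n. (\<Sum>j<n. a i j * a j k) = 0" and b0: "\<forall>i<n. b i = 0"
  shows "eacp_pow a b n k v \<Longrightarrow> k \<ge> 2 \<Longrightarrow> eacp_left_kernel a n v"
proof (induction rule: eacp_pow.induct)
  case (prod i x j y)
  show ?case using sq b0 by (rule eacp_mult_left_kernel)
qed (auto simp: eacp_left_kernel_def sum.distrib distrib_right mult.assoc
                sum_distrib_left[symmetric])

lemma eacp_pow_3_zero:
  assumes sq: "\<forall>i<n. \<forall>k<n. (\<Sum>j<n. a i j * a j k) = 0" and b0: "\<forall>i<n. b i = 0"
  shows "eacp_pow a b n k v \<Longrightarrow> k \<ge> 3 \<Longrightarrow> v = (\<lambda>m. 0)"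
proof (induction rule: eacp_pow.induct)
  case (prod i x j y)
  have "i \<ge> 1" "j \<ge> 1" using prod.hyps by (auto dest: eacp_pow_ge_1)
  with prod.prems have "i \<ge> 2 \<or> j \<ge> 2" by arith
  then show ?case
  proof
    assume "i \<ge> 2"
    with prod.hyps(1) have "eacp_left_kernel a n x"
      using sq b0 by (blast intro: eacp_pow_2_left_kernel)
    with b0 show ?thesis by (rule eacp_mult_left_kernel_zero)
  next
    assume "j \<ge> 2"
    with prod.hyps(2) have "eacp_left_kernel a n y"
      using sq b0 by (blast intro: eacp_pow_2_left_kernel)
    with b0 show ?thesis by (subst eacp_mult_commute) (rule eacp_mult_left_kernel_zero)
  qed
qed auto

lemma eacp_power_1_nonzero: "eacp_power a b n 1 \<noteq> {\<lambda>m. 0}"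
proof
  define e :: "nat \<Rightarrow> 'a" where "e = (\<lambda>m. if m = 0 then 1 else 0)"
  have "e \<in> eacp_power a b n 1"
    unfolding eacp_power_def e_def by (rule CollectI, rule eacp_pow.base) (simp add: eacp_carrier_def)
  moreover assume "eacp_power a b n 1 = {\<lambda>m. 0}"
  ultimately have "e 0 = 0" by auto
  then show False by (simp add: e_def)
qed

lemma eacp_power_2_nonzero:
  assumes char: "(2::'k::field) \<noteq> 0" and ij: "i < n" "j < n" "a i j \<noteq> (0::'k)"
  shows "eacp_power a b n 2 \<noteq> {\<lambda>m. 0}"
proof
  define h :: "nat \<Rightarrow> 'k" where "h = (\<lambda>m. if m = i then 1 else 0)"
  define r :: "nat \<Rightarrow> 'k" where "r = (\<lambda>m. if m = n then 1 else 0)"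
  have "eacp_pow a b n (1 + 1) (eacp_mult a b n h r)"
    using ij by (intro eacp_pow.prod eacp_pow.base) (auto simp: eacp_carrier_def h_def r_def)
  then have "eacp_mult a b n h r \<in> eacp_power a b n 2"
    by (simp add: eacp_power_def numeral_2_eq_2)
  moreover have "eacp_mult a b n h r j = a i j / 2"
  proof -
    have "(\<Sum>l<n. (h l * r n + h n * r l) * a l j) = (\<Sum>l<n. if l = i then a l j else 0)"
      using ij by (intro sum.cong) (auto simp: h_def r_def)
    with ij show ?thesis by (simp add: eacp_mult_below)
  qed
  moreover assume "eacp_power a b n 2 = {\<lambda>m. 0}"
  ultimately show False using char ij by auto
qed

lemma eacp_nil_index_eqI:
  assumes "k \<ge> 1" "eacp_power a b n k = {\<lambda>m. 0}"
    and "\<And>l. 1 \<le> l \<Longrightarrow> l < k \<Longrightarrow> eacp_power a b n l \<noteq> {\<lambda>m. 0}"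
  shows "eacp_nil_index a b n = k"
  unfolding eacp_nil_index_def
proof (rule Least_equality)
  fix l assume "1 \<le> l \<and> eacp_power a b n l = {\<lambda>m. 0}"
  with assms(3) show "k \<le> l" by (meson not_less)
qed (use assms in simp)

theorem mainTheorem4:
  fixes a :: "nat \<Rightarrow> nat \<Rightarrow> 'k::field" and b :: "nat \<Rightarrow> 'k" and n :: nat
  assumes char: "(2::'k) \<noteq> 0"
    and n: "n \<ge> 1"
    and sq: "\<forall>i<n. \<forall>k<n. (\<Sum>j<n. a i j * a j k) = 0"
    and b0: "\<forall>i<n. b i = 0"
    and nonzero: "\<exists>i<n. \<exists>j<n. a i j \<noteq> 0"
  shows "eacp_nilpotent a b n \<and> eacp_nil_index a b n = 3"
proof -
  have p3: "eacp_power a b n 3 = {\<lambda>m. 0}"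
    using eacp_pow_3_zero[OF sq b0] by (auto simp: eacp_power_def intro: eacp_pow.zero)
  obtain i j where "i < n" "j < n" "a i j \<noteq> 0" using nonzero by blast
  then have "eacp_power a b n 2 \<noteq> {\<lambda>m. 0}" using char by (intro eacp_power_2_nonzero)
  moreover have "l = 1 \<or> l = 2" if "1 \<le> l" "l < 3" for l :: nat
    using that by arith
  ultimately have "\<And>l. 1 \<le> l \<Longrightarrow> l < 3 \<Longrightarrow> eacp_power a b n l \<noteq> {\<lambda>m. 0}"
    using eacp_power_1_nonzero by blast
  with p3 show ?thesis
    unfolding eacp_nilpotent_def by (auto intro: eacp_nil_index_eqI exI[of _ 3])
qed

end
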